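(* Let $(\mathcal{M},\delta)$ be a path-connected metric space and let $P\subset\mathcal{M}$ be a finite set with $|P|\ge 2$. Then $GR_P\ge 1$.
   Context: For a metric space $(\mathcal{M},\delta)$ and a finite set $P\subset\mathcal{M}$ with $|P|\ge 2$, define $r_P=\min_{p,q\in P,\,p\neq q}\delta(p,q)/2$, $R_P=\sup_{x\in\mathcal{M}}\min_{p\in P}\delta(x,p)$, and the gap ratio $GR_P=R_P/r_P$. *)

theory Defs
  imports "HOL-Analysis.Analysis" "HOL-Library.Extended_Real"
begin

definition packing_radius :: "'a::metric_space set \<Rightarrow> real" where
  "packing_radius P = Min {dist p q | p q. p \<in> P \<and> q \<in> P \<and> p \<noteq> q} / 2"

text \<open>Covering radius: sup over the whole space of the distance to the nearest point of P.
  Taken in the extended reals, since the space may be unbounded.\<close>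
definition covering_radius :: "'a::metric_space set \<Rightarrow> ereal" where
  "covering_radius P = (SUP x\<in>(UNIV::'a set). ereal (Min ((\<lambda>p. dist x p) ` P)))"

definition gap_ratio :: "'a::metric_space set \<Rightarrow> ereal" where
  "gap_ratio P = covering_radius P / ereal (packing_radius P)"

end

theory Submission
  imports Defs
begin

text \<open>Fix \<open>p \<in> P\<close> and let \<open>A = P - {p}\<close>. On a connected space the continuous function
  \<open>x \<mapsto> dist x p - infdist x A\<close> is negative at \<open>p\<close> and positive on \<open>A\<close>, so it vanishes at some
  \<open>x\<close>. Then \<open>x\<close> has distance \<open>t = dist x p\<close> to its nearest point of \<open>P\<close>, and the triangle
  inequality through \<open>x\<close> gives \<open>2 r\<^sub>P \<le> infdist p A \<le> 2 t\<close>. Hence \<open>R\<^sub>P \<ge> t \<ge> r\<^sub>P\<close>.\<close>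

lemma infdist_finite_eq_Min:
  assumes "finite A" "A \<noteq> {}"
  shows "infdist x A = Min (dist x ` A)"
  unfolding infdist_def using assms by (simp add: cInf_eq_Min)

lemma finite_pairwise_dists:
  fixes P :: "'a::metric_space set"
  assumes "finite P"
  shows "finite {dist p q | p q. p \<in> P \<and> q \<in> P \<and> p \<noteq> q}"
proof -
  have "{dist p q | p q. p \<in> P \<and> q \<in> P \<and> p \<noteq> q} \<subseteq> (\<lambda>(p, q). dist p q) ` (P \<times> P)"
    by auto
  then show ?thesis
    using assms finite_subset by blast
qed

lemma packing_radius_le_half_dist:
  fixes P :: "'a::metric_space set"
  assumes "finite P" "p \<in> P" "q \<in> P" "p \<noteq> q"
  shows "2 * packing_radius P \<le> dist p q"
  using assms finite_pairwise_dists[OF assms(1)]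
  unfolding packing_radius_def by (auto intro: Min_le)

lemma packing_radius_pos:
  fixes P :: "'a::metric_space set"
  assumes "finite P" "card P \<ge> 2"
  shows "packing_radius P > 0"
proof -
  let ?D = "{dist p q | p q. p \<in> P \<and> q \<in> P \<and> p \<noteq> q}"
  have "finite ?D"
    using finite_pairwise_dists[OF assms(1)] .
  moreover obtain p q where "p \<in> P" "q \<in> P" "p \<noteq> q"
    using assms card_le_Suc0_iff_eq[OF assms(1)] by (metis not_less_eq_eq numeral_2_eq_2)
  then have "?D \<noteq> {}"
    by blast
  ultimately show ?thesis
    unfolding packing_radius_def by auto
qed

lemma infdist_le_covering_radius:
  fixes P :: "'a::metric_space set"
  assumes "finite P" "P \<noteq> {}"
  shows "ereal (infdist x P) \<le> covering_radius P"
  unfolding covering_radius_def infdist_finite_eq_Min[OF assms]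
  by (rule SUP_upper) simp

lemma connected_exists_equidistant:
  fixes A :: "'a::metric_space set"
  assumes "connected (UNIV :: 'a set)" "closed A" "A \<noteq> {}" "p \<notin> A"
  obtains x where "dist x p = infdist x A"
proof -
  define h where "h x = dist x p - infdist x A" for x
  have "continuous_on UNIV h"
    unfolding h_def by (intro continuous_intros continuous_on_infdist)
  then have "connected (range h)"
    using assms(1) connected_continuous_image by blast
  moreover have "h p < 0"
    unfolding h_def using infdist_pos_not_in_closed[OF assms(2-4)] by simp
  moreover obtain q where "q \<in> A"
    using assms(3) by blast
  then have "h q > 0"
    unfolding h_def using assms(4) by auto
  ultimately have "0 \<in> range h"
    using connectedD_interval[of "range h" "h p" "h q" 0] by auto
  with that show ?thesis
    unfolding h_def by auto
qed

lemma packing_radius_le_covering_radius: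
  fixes P :: "'a::metric_space set"
  assumes "connected (UNIV :: 'a set)" "finite P" "card P \<ge> 2"
  shows "ereal (packing_radius P) \<le> covering_radius P"
proof -
  obtain p where p: "p \<in> P"
    using assms(3) by fastforce
  define A where "A = P - {p}"
  have "\<not> P \<subseteq> {p}"
    using card_mono[of "{p}" P] assms(3) by auto
  then have A: "finite A" "A \<noteq> {}" "p \<notin> A"
    unfolding A_def using assms(2) by auto
  obtain x where x: "dist x p = infdist x A"
    using connected_exists_equidistant[OF assms(1) finite_imp_closed] A by metis
  have P: "P = {p} \<union> A"
    unfolding A_def using p by blast
  have nearest: "infdist x P = dist x p"
    unfolding P using infdist_Un_min[of "{p}" A x] A(2) x by simp
  have "2 * packing_radius P \<le> infdist p A"
  proof -
    have "Min (dist p ` A) \<in> dist p ` A"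
      using A by (intro Min_in) auto
    then obtain a where "a \<in> A" "infdist p A = dist p a"
      using infdist_finite_eq_Min[OF A(1,2)] by auto
    then show ?thesis
      using packing_radius_le_half_dist[OF assms(2) p, of a] unfolding A_def by auto
  qed
  also have "\<dots> \<le> infdist x A + dist p x"
    by (rule infdist_triangle)
  also have "\<dots> = 2 * infdist x P"
    using nearest x by (simp add: dist_commute)
  finally have "packing_radius P \<le> infdist x P"
    by simp
  also have "ereal (infdist x P) \<le> covering_radius P"
    using infdist_le_covering_radius assms(2) p by blast
  finally show ?thesis
    by simp
qed

theorem lemma1:
  fixes P :: "'a::metric_space set"
  assumes "path_connected (UNIV :: 'a set)"
    and "finite P" and "card P \<ge> 2"
  shows "gap_ratio P \<ge> 1"
proof -
  have "packing_radius P > 0"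
    using packing_radius_pos assms(2,3) by blast
  moreover have "ereal (packing_radius P) \<le> covering_radius P"
    using packing_radius_le_covering_radius path_connected_imp_connected assms by blast
  ultimately show ?thesis
    unfolding gap_ratio_def by (simp add: ereal_le_divide_pos)
qed

end
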